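(* Let $\mathsf C$ be any smooth vector field on $\mathbb R^3$ and $\widetilde\nabla$ the snm-connection determined by $\mathsf C$. Let $M$ be an oriented surface immersed in $\mathbb R^3$ with unit normal $N$, Gaussian curvature $G$ and mean curvature $H$ (with respect to the Euclidean Levi-Civita connection). Then at every point $p\in M$, $$K(p)=\widetilde K(T_pM)+G(p)-\langle \mathsf C(p),N(p)\rangle\, H(p).$$
   Context: Let $\langle\cdot,\cdot\rangle$ be the Euclidean metric on $\mathbb R^3$ and $\widetilde\nabla^0$ its Levi-Civita connection (the ordinary directional derivative). Given a smooth vector field $\mathsf C$ on $\mathbb R^3$, the semi-symmetric non-metric connection (snm-connection) determined by $\mathsf C$ is $\widetilde\nabla_XY=\widetilde\nabla^0_XY+\langle \mathsf C,Y\rangle X$. Its curvature tensor is $\widetilde R(X,Y)Z=\widetilde\nabla_X\widetilde\nabla_YZ-\widetilde\nabla_Y\widetilde\nabla_XZ-\widetilde\nabla_{[X,Y]}Z$. For a $2$-dimensional subspace $\pi\subset T_p\mathbb R^3$ with orthonormal basis $\{e_1,e_2\}$, its sectional curvature with respect to $\widetilde\nabla$ is $\widetilde K(\pi)=\frac12\big(\langle\widetilde R(e_1,e_2)e_2,e_1\rangle+\langle\widetilde R(e_2,e_1)e_1,e_2\rangle\big)$ (independent of the orthonormal basis). For a surface $M$ immersed in $\mathbb R^3$, the induced connection is $\nabla_XY=(\widetilde\nabla_XY)^{\top}$ (tangential component) for tangent vector fields $X,Y$, with curvature tensor $R$ defined by the same formula as $\widetilde R$, and the sectional curvature of $M$ with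 respect to $\widetilde\nabla$ at $p$ is $K(p)=\frac12\big(\langle R(e_1,e_2)e_2,e_1\rangle+\langle R(e_2,e_1)e_1,e_2\rangle\big)$ for an orthonormal basis $\{e_1,e_2\}$ of $T_pM$. The second fundamental form is $h(X,Y)=\langle\widetilde\nabla^0_XY,N\rangle$; $G$ is the determinant and $H$ is one half of the trace of the associated shape operator. *)

theory Defs
  imports "HOL-Analysis.Analysis"
begin

type_synonym R3 = "real^3"
type_synonym R2 = "real^2"

fun Ck_on :: "nat \<Rightarrow> 'a::euclidean_space set \<Rightarrow> ('a \<Rightarrow> 'b::euclidean_space) \<Rightarrow> bool" where
  "Ck_on 0 S f = continuous_on S f"
| "Ck_on (Suc k) S f = ((\<forall>x\<in>S. f differentiable (at x)) \<and>
      (\<forall>v. Ck_on k S (\<lambda>x. frechet_derivative f (at x) v)))"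

definition smooth_on :: "'a::euclidean_space set \<Rightarrow> ('a \<Rightarrow> 'b::euclidean_space) \<Rightarrow> bool" where
  "smooth_on S f = (\<forall>k. Ck_on k S f)"

definition flat_conn :: "(R3 \<Rightarrow> R3) \<Rightarrow> (R3 \<Rightarrow> R3) \<Rightarrow> R3 \<Rightarrow> R3" where
  "flat_conn X Y = (\<lambda>p. frechet_derivative Y (at p) (X p))"

definition snm_conn :: "(R3 \<Rightarrow> R3) \<Rightarrow> (R3 \<Rightarrow> R3) \<Rightarrow> (R3 \<Rightarrow> R3) \<Rightarrow> R3 \<Rightarrow> R3" where
  "snm_conn C X Y = (\<lambda>p. flat_conn X Y p + (C p \<bullet> Y p) *\<^sub>R X p)"

definition lie_amb :: "(R3 \<Rightarrow> R3) \<Rightarrow> (R3 \<Rightarrow> R3) \<Rightarrow> R3 \<Rightarrow> R3" where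
  "lie_amb X Y = (\<lambda>p. flat_conn X Y p - flat_conn Y X p)"

definition curv_amb :: "(R3 \<Rightarrow> R3) \<Rightarrow> (R3 \<Rightarrow> R3) \<Rightarrow> (R3 \<Rightarrow> R3) \<Rightarrow> (R3 \<Rightarrow> R3) \<Rightarrow> R3 \<Rightarrow> R3" where
  "curv_amb C X Y Z = (\<lambda>p. snm_conn C X (snm_conn C Y Z) p - snm_conn C Y (snm_conn C X Z) p
                          - snm_conn C (lie_amb X Y) Z p)"

text \<open>Sectional curvature of the plane spanned by X1 p, X2 p (an orthonormal pair),
  computed from vector fields X1, X2 extending the basis vectors.\<close>
definition sec_amb :: "(R3 \<Rightarrow> R3) \<Rightarrow> (R3 \<Rightarrow> R3) \<Rightarrow> (R3 \<Rightarrow> R3) \<Rightarrow> R3 \<Rightarrow> real" where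
  "sec_amb C X1 X2 p = (curv_amb C X1 X2 X2 p \<bullet> X1 p + curv_amb C X2 X1 X1 p \<bullet> X2 p) / 2"

definition tangent_space :: "(R2 \<Rightarrow> R3) \<Rightarrow> R2 \<Rightarrow> R3 set" where
  "tangent_space f u = range (frechet_derivative f (at u))"

definition tangent_field :: "(R2 \<Rightarrow> R3) \<Rightarrow> R2 set \<Rightarrow> (R2 \<Rightarrow> R3) \<Rightarrow> bool" where
  "tangent_field f U X = (smooth_on U X \<and> (\<forall>u\<in>U. X u \<in> tangent_space f u))"

text \<open>Coordinate vector of a tangent vector v at u (preimage under df_u; unique for an immersion).\<close>
definition coord :: "(R2 \<Rightarrow> R3) \<Rightarrow> R2 \<Rightarrow> R3 \<Rightarrow> R2" where
  "coord f u v = (SOME \<xi>. frechet_derivative f (at u) \<xi> = v)"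

definition flat_surf :: "(R2 \<Rightarrow> R3) \<Rightarrow> (R2 \<Rightarrow> R3) \<Rightarrow> (R2 \<Rightarrow> R3) \<Rightarrow> R2 \<Rightarrow> R3" where
  "flat_surf f X Y = (\<lambda>u. frechet_derivative Y (at u) (coord f u (X u)))"

definition tan_part :: "(R2 \<Rightarrow> R3) \<Rightarrow> R2 \<Rightarrow> R3 \<Rightarrow> R3" where
  "tan_part N u v = v - (v \<bullet> N u) *\<^sub>R N u"

definition ind_conn :: "(R3 \<Rightarrow> R3) \<Rightarrow> (R2 \<Rightarrow> R3) \<Rightarrow> (R2 \<Rightarrow> R3) \<Rightarrow> (R2 \<Rightarrow> R3) \<Rightarrow> (R2 \<Rightarrow> R3) \<Rightarrow> R2 \<Rightarrow> R3" where
  "ind_conn C f N X Y = (\<lambda>u. tan_part N u (flat_surf f X Y u + (C (f u) \<bullet> Y u) *\<^sub>R X u))"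

definition lie_surf :: "(R2 \<Rightarrow> R3) \<Rightarrow> (R2 \<Rightarrow> R3) \<Rightarrow> (R2 \<Rightarrow> R3) \<Rightarrow> R2 \<Rightarrow> R3" where
  "lie_surf f X Y = (\<lambda>u. flat_surf f X Y u - flat_surf f Y X u)"

definition curv_surf :: "(R3 \<Rightarrow> R3) \<Rightarrow> (R2 \<Rightarrow> R3) \<Rightarrow> (R2 \<Rightarrow> R3) \<Rightarrow>
    (R2 \<Rightarrow> R3) \<Rightarrow> (R2 \<Rightarrow> R3) \<Rightarrow> (R2 \<Rightarrow> R3) \<Rightarrow> R2 \<Rightarrow> R3" where
  "curv_surf C f N X Y Z = (\<lambda>u. ind_conn C f N X (ind_conn C f N Y Z) u
       - ind_conn C f N Y (ind_conn C f N X Z) u - ind_conn C f N (lie_surf f X Y) Z u)"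

definition sec_surf :: "(R3 \<Rightarrow> R3) \<Rightarrow> (R2 \<Rightarrow> R3) \<Rightarrow> (R2 \<Rightarrow> R3) \<Rightarrow> (R2 \<Rightarrow> R3) \<Rightarrow> (R2 \<Rightarrow> R3) \<Rightarrow> R2 \<Rightarrow> real" where
  "sec_surf C f N E1 E2 u = (curv_surf C f N E1 E2 E2 u \<bullet> E1 u + curv_surf C f N E2 E1 E1 u \<bullet> E2 u) / 2"

definition sff :: "(R2 \<Rightarrow> R3) \<Rightarrow> (R2 \<Rightarrow> R3) \<Rightarrow> (R2 \<Rightarrow> R3) \<Rightarrow> (R2 \<Rightarrow> R3) \<Rightarrow> R2 \<Rightarrow> real" where
  "sff f N X Y u = flat_surf f X Y u \<bullet> N u"

text \<open>Value of h on tangent vectors v, w at u, using the coordinate extension of w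
  (the tangent field x \<mapsto> df_x (coord w)); h is tensorial so the choice is immaterial.\<close>
definition sff_vec :: "(R2 \<Rightarrow> R3) \<Rightarrow> (R2 \<Rightarrow> R3) \<Rightarrow> R2 \<Rightarrow> R3 \<Rightarrow> R3 \<Rightarrow> real" where
  "sff_vec f N u v w = sff f N (\<lambda>x. frechet_derivative f (at x) (coord f u v))
                                (\<lambda>x. frechet_derivative f (at x) (coord f u w)) u"

definition onb_tangent :: "(R2 \<Rightarrow> R3) \<Rightarrow> R2 \<Rightarrow> R3 \<Rightarrow> R3 \<Rightarrow> bool" where
  "onb_tangent f u e1 e2 = (e1 \<in> tangent_space f u \<and> e2 \<in> tangent_space f u \<and>
      norm e1 = 1 \<and> norm e2 = 1 \<and> e1 \<bullet> e2 = 0)"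

text \<open>Gaussian curvature = determinant, mean curvature = half the trace of the shape operator,
  computed from its matrix (h(e_i,e_j)) in an orthonormal basis of T_pM.\<close>
definition gauss_curv :: "(R2 \<Rightarrow> R3) \<Rightarrow> (R2 \<Rightarrow> R3) \<Rightarrow> R2 \<Rightarrow> real" where
  "gauss_curv f N u = (let (e1, e2) = (SOME (e1, e2). onb_tangent f u e1 e2) in
      sff_vec f N u e1 e1 * sff_vec f N u e2 e2 - sff_vec f N u e1 e2 * sff_vec f N u e2 e1)"

definition mean_curv :: "(R2 \<Rightarrow> R3) \<Rightarrow> (R2 \<Rightarrow> R3) \<Rightarrow> R2 \<Rightarrow> real" where
  "mean_curv f N u = (let (e1, e2) = (SOME (e1, e2). onb_tangent f u e1 e2) in
      (sff_vec f N u e1 e1 + sff_vec f N u e2 e2) / 2)"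

end

theory Submission
  imports Defs
begin

text \<open>For the snm-connection on \<open>\<real>\<^sup>3\<close> the second
  derivatives of \<open>Z\<close> cancel by Schwarz's theorem, leaving \<open>R\<^sup>~(X,Y)Z = s(X,Z)Y - s(Y,Z)X\<close> with
  \<open>s(X,Z) = \<langle>\<nabla>\<^sup>0\<^sub>X C, Z\<rangle> - \<langle>C,X\<rangle>\<langle>C,Z\<rangle>\<close>. On the surface, differentiating the normal component of
  \<open>\<nabla>\<^sup>~\<^sub>Y Z\<close> produces the classical Gauss terms \<open>h(Y,Z)h(X,T) - h(X,Z)h(Y,T)\<close>, and the term
  \<open>\<langle>C, \<nabla>\<^sub>Y Z\<rangle> X\<close> of the snm-connection loses \<open>\<langle>C,N\<rangle>h(Y,Z)\<close> to the tangential projection.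
  On an orthonormal tangent basis these extra terms are exactly \<open>G\<close> and \<open>-\<langle>C,N\<rangle>H\<close>.\<close>

lemma smooth_on_differentiable: "smooth_on S F \<Longrightarrow> x \<in> S \<Longrightarrow> F differentiable (at x)"
  unfolding smooth_on_def by (metis Ck_on.simps(2))

lemma smooth_on_frechet_derivative:
  "smooth_on S F \<Longrightarrow> smooth_on S (\<lambda>x. frechet_derivative F (at x) v)"
  unfolding smooth_on_def by (metis Ck_on.simps(2))

lemma smooth_on_continuous_on: "smooth_on S F \<Longrightarrow> continuous_on S F"
  unfolding smooth_on_def by (metis Ck_on.simps(1))

lemma smooth_on_has_derivative:
  "smooth_on S F \<Longrightarrow> x \<in> S \<Longrightarrow> (F has_derivative frechet_derivative F (at x)) (at x)"
  using smooth_on_differentiable frechet_derivative_works by blast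

lemma smooth_on_linear_derivative: "smooth_on S F \<Longrightarrow> x \<in> S \<Longrightarrow> linear (frechet_derivative F (at x))"
  using smooth_on_has_derivative has_derivative_linear by blast

lemma linear_basis_expansion:
  fixes L :: "'a::euclidean_space \<Rightarrow> 'b::real_vector"
  assumes "linear L"
  shows "L v = (\<Sum>i\<in>Basis. (v \<bullet> i) *\<^sub>R L i)"
proof -
  have "L v = L (\<Sum>i\<in>Basis. (v \<bullet> i) *\<^sub>R i)"
    by (simp add: euclidean_representation)
  then show ?thesis
    by (simp add: linear_sum[OF assms] linear_cmul[OF assms])
qed

section \<open>Second derivatives\<close>

definition second_derivative ::
    "('a::real_normed_vector \<Rightarrow> 'b::real_normed_vector) \<Rightarrow> 'a \<Rightarrow> 'a \<Rightarrow> 'a \<Rightarrow> 'b" where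
  "second_derivative F p v h = frechet_derivative (\<lambda>q. frechet_derivative F (at q) v) (at p) h"

lemma continuous_on_second_derivative:
  "smooth_on S F \<Longrightarrow> continuous_on S (\<lambda>q. second_derivative F q v h)"
  unfolding second_derivative_def
  using smooth_on_continuous_on[OF smooth_on_frechet_derivative[OF smooth_on_frechet_derivative]] .

lemma mvt_inner_segment:
  fixes K :: "'a::real_normed_vector \<Rightarrow> 'b::real_inner"
  assumes h: "0 < h" and K: "\<And>t. t \<in> {0..h} \<Longrightarrow> (K has_derivative K' t) (at (q + t *\<^sub>R d))"
  shows "\<exists>\<tau>. 0 < \<tau> \<and> \<tau> < h \<and> K (q + h *\<^sub>R d) \<bullet> w - K q \<bullet> w = h * (K' \<tau> d \<bullet> w)"
proof -
  have "((\<lambda>t. K (q + t *\<^sub>R d) \<bullet> w) has_real_derivative (K' t d \<bullet> w)) (at t)"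
    if "0 \<le> t" "t \<le> h" for t
  proof -
    have lin: "linear (K' t)" using K[of t] that has_derivative_linear by auto
    have "((\<lambda>t. q + t *\<^sub>R d) has_derivative (\<lambda>s. s *\<^sub>R d)) (at t)"
      by (auto intro!: derivative_eq_intros)
    from has_derivative_compose[OF this K[of t]] that
    have "((\<lambda>t. K (q + t *\<^sub>R d) \<bullet> w) has_derivative (\<lambda>s. K' t (s *\<^sub>R d) \<bullet> w)) (at t)"
      by (auto intro: has_derivative_inner_left)
    then show ?thesis
      by (rule has_derivative_imp_has_field_derivative) (simp add: linear_cmul[OF lin])
  qed
  from MVT2[OF h this] show ?thesis by fastforce
qed

lemma dist_parallelogram_point_less:
  fixes a b p :: "'a::real_normed_vector"
  assumes "0 \<le> s" "s \<le> h" "0 \<le> t" "t \<le> h" and "h * (norm a + norm b) < r"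
  shows "dist (p + s *\<^sub>R a + t *\<^sub>R b) p < r"
proof -
  have "norm (s *\<^sub>R a + t *\<^sub>R b) \<le> s * norm a + t * norm b"
    using norm_triangle_ineq[of "s *\<^sub>R a" "t *\<^sub>R b"] assms by simp
  also have "\<dots> \<le> h * norm a + h * norm b"
    using assms by (intro add_mono mult_right_mono) auto
  finally show ?thesis
    using assms(5) by (simp add: dist_norm algebra_simps)
qed

lemma second_difference_mvt:
  fixes F :: "'a::euclidean_space \<Rightarrow> 'b::euclidean_space"
  assumes F: "smooth_on S F" and ball: "ball p r \<subseteq> S" and h: "0 < h"
    and hr: "h * (norm a + norm b) < r"
  shows "\<exists>s t. 0 < s \<and> s < h \<and> 0 < t \<and> t < h \<and>
    (F (p + h *\<^sub>R a + h *\<^sub>R b) - F (p + h *\<^sub>R a) - F (p + h *\<^sub>R b) + F p) \<bullet> w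
      = h * h * (second_derivative F (p + s *\<^sub>R a + t *\<^sub>R b) a b \<bullet> w)"
proof -
  have in_S: "p + s *\<^sub>R a + t *\<^sub>R b \<in> S" if "0 \<le> s" "s \<le> h" "0 \<le> t" "t \<le> h" for s t
    using dist_parallelogram_point_less[OF that hr] ball by (auto simp: dist_commute)
  define DF where "DF q = frechet_derivative F (at q)" for q
  define K1 where "K1 x = F (x + h *\<^sub>R b) - F x" for x
  obtain \<sigma> where \<sigma>: "0 < \<sigma>" "\<sigma> < h" and K1:
    "K1 (p + h *\<^sub>R a) \<bullet> w - K1 p \<bullet> w
       = h * ((DF (p + \<sigma> *\<^sub>R a + h *\<^sub>R b) a - DF (p + \<sigma> *\<^sub>R a) a) \<bullet> w)"
  proof -
    have "(K1 has_derivative (\<lambda>v. DF (p + t *\<^sub>R a + h *\<^sub>R b) v - DF (p + t *\<^sub>R a) v))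
            (at (p + t *\<^sub>R a))" if "t \<in> {0..h}" for t
    proof -
      have "((\<lambda>x. x + h *\<^sub>R b) has_derivative (\<lambda>v. v)) (at (p + t *\<^sub>R a))"
        by (auto intro!: derivative_eq_intros)
      from has_derivative_compose[OF this smooth_on_has_derivative[OF F in_S[of t h]]]
      have "((\<lambda>x. F (x + h *\<^sub>R b)) has_derivative DF (p + t *\<^sub>R a + h *\<^sub>R b)) (at (p + t *\<^sub>R a))"
        using that h by (simp add: DF_def)
      then show ?thesis
        unfolding K1_def DF_def
        using smooth_on_has_derivative[OF F in_S[of t 0]] that h
        by (auto intro: has_derivative_diff)
    qed
    from mvt_inner_segment[OF h this] that show thesis by auto
  qed
  define K2 where "K2 q = DF q a" for q
  have K2: "smooth_on S K2"
    unfolding K2_def DF_def by (rule smooth_on_frechet_derivative[OF F])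
  obtain \<tau> where \<tau>: "0 < \<tau>" "\<tau> < h" and K2_mvt:
    "K2 ((p + \<sigma> *\<^sub>R a) + h *\<^sub>R b) \<bullet> w - K2 (p + \<sigma> *\<^sub>R a) \<bullet> w
       = h * (frechet_derivative K2 (at ((p + \<sigma> *\<^sub>R a) + \<tau> *\<^sub>R b)) b \<bullet> w)"
  proof -
    have "(K2 has_derivative frechet_derivative K2 (at (p + \<sigma> *\<^sub>R a + t *\<^sub>R b)))
            (at (p + \<sigma> *\<^sub>R a + t *\<^sub>R b))" if "t \<in> {0..h}" for t
      using smooth_on_has_derivative[OF K2 in_S[of \<sigma> t]] that \<sigma> by auto
    from mvt_inner_segment[OF h this] that show thesis by auto
  qed
  have "(F (p + h *\<^sub>R a + h *\<^sub>R b) - F (p + h *\<^sub>R a) - F (p + h *\<^sub>R b) + F p) \<bullet> w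
      = K1 (p + h *\<^sub>R a) \<bullet> w - K1 p \<bullet> w"
    unfolding K1_def by (simp add: inner_diff_left inner_add_left)
  also have "\<dots> = h * (K2 ((p + \<sigma> *\<^sub>R a) + h *\<^sub>R b) \<bullet> w - K2 (p + \<sigma> *\<^sub>R a) \<bullet> w)"
    unfolding K1 K2_def by (simp add: inner_diff_left)
  also have "\<dots> = h * h * (second_derivative F (p + \<sigma> *\<^sub>R a + \<tau> *\<^sub>R b) a b \<bullet> w)"
    unfolding K2_mvt by (simp add: second_derivative_def K2_def[abs_def] DF_def)
  finally show ?thesis using \<sigma> \<tau> by blast
qed

text \<open>Schwarz's theorem: both second derivatives are limits of the same second difference
  quotient, by the mean value theorem applied in either order.\<close>
lemma second_derivative_symmetric:
  fixes F :: "'a::euclidean_space \<Rightarrow> 'b::euclidean_space"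
  assumes F: "smooth_on S F" and S: "open S" and p: "p \<in> S"
  shows "second_derivative F p a b = second_derivative F p b a"
proof (rule euclidean_eqI)
  fix w :: 'b
  define G1 where "G1 q = second_derivative F q a b \<bullet> w" for q
  define G2 where "G2 q = second_derivative F q b a \<bullet> w" for q
  have cont: "isCont G1 p" "isCont G2 p"
    unfolding G1_def G2_def
    using continuous_on_second_derivative[OF F] S p
    by (auto intro!: continuous_intros simp: continuous_on_eq_continuous_at)
  obtain r where r: "0 < r" "ball p r \<subseteq> S"
    using S p open_contains_ball by blast
  have close: "\<bar>G1 p - G2 p\<bar> < e" if e: "0 < e" for e
  proof -
    obtain d1 where d1: "0 < d1" "\<And>q. dist q p < d1 \<Longrightarrow> \<bar>G1 q - G1 p\<bar> < e / 2"
      using cont(1) e unfolding continuous_at_eps_delta dist_real_def by (meson half_gt_zero)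
    obtain d2 where d2: "0 < d2" "\<And>q. dist q p < d2 \<Longrightarrow> \<bar>G2 q - G2 p\<bar> < e / 2"
      using cont(2) e unfolding continuous_at_eps_delta dist_real_def by (meson half_gt_zero)
    define m where "m = min r (min d1 d2)"
    define h where "h = m / (norm a + norm b + 1)"
    have m: "0 < m" using r d1 d2 by (simp add: m_def)
    have pos: "0 < norm a + norm b + 1" by (smt (verit) norm_ge_zero)
    then have h: "0 < h" using m by (simp add: h_def)
    have hm: "h * (norm a + norm b) < m"
    proof -
      have "h * (norm a + norm b) < h * (norm a + norm b + 1)" using h by simp
      also have "\<dots> = m" using pos by (simp add: h_def)
      finally show ?thesis .
    qed
    have ball_m: "ball p m \<subseteq> S" using r(2) by (auto simp: m_def)
    obtain s1 t1 where st1: "0 < s1" "s1 < h" "0 < t1" "t1 < h" and diff1: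
      "(F (p + h *\<^sub>R a + h *\<^sub>R b) - F (p + h *\<^sub>R a) - F (p + h *\<^sub>R b) + F p) \<bullet> w
         = h * h * G1 (p + s1 *\<^sub>R a + t1 *\<^sub>R b)"
      using second_difference_mvt[OF F ball_m h hm] unfolding G1_def by blast
    obtain s2 t2 where st2: "0 < s2" "s2 < h" "0 < t2" "t2 < h" and diff2:
      "(F (p + h *\<^sub>R b + h *\<^sub>R a) - F (p + h *\<^sub>R b) - F (p + h *\<^sub>R a) + F p) \<bullet> w
         = h * h * G2 (p + s2 *\<^sub>R b + t2 *\<^sub>R a)"
      using second_difference_mvt[OF F ball_m h, of b a] hm unfolding G2_def
      by (metis add.commute)
    have "F (p + h *\<^sub>R b + h *\<^sub>R a) - F (p + h *\<^sub>R b) - F (p + h *\<^sub>R a) + F p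
        = F (p + h *\<^sub>R a + h *\<^sub>R b) - F (p + h *\<^sub>R a) - F (p + h *\<^sub>R b) + F p"
      by (simp add: algebra_simps)
    with diff1 diff2 h have G_eq: "G1 (p + s1 *\<^sub>R a + t1 *\<^sub>R b) = G2 (p + s2 *\<^sub>R b + t2 *\<^sub>R a)"
      by simp
    have "dist (p + s1 *\<^sub>R a + t1 *\<^sub>R b) p < d1"
      using dist_parallelogram_point_less[of s1 h t1 a b m p] st1 hm by (simp add: m_def)
    then have "\<bar>G1 (p + s1 *\<^sub>R a + t1 *\<^sub>R b) - G1 p\<bar> < e / 2" by (rule d1(2))
    moreover have "dist (p + s2 *\<^sub>R b + t2 *\<^sub>R a) p < d2"
      using dist_parallelogram_point_less[of s2 h t2 b a m p] st2 hm by (simp add: m_def add.commute)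
    then have "\<bar>G2 (p + s2 *\<^sub>R b + t2 *\<^sub>R a) - G2 p\<bar> < e / 2" by (rule d2(2))
    ultimately show ?thesis
      using G_eq by linarith
  qed
  show "second_derivative F p a b \<bullet> w = second_derivative F p b a \<bullet> w"
    using close[of "\<bar>G1 p - G2 p\<bar>"] unfolding G1_def G2_def by force
qed

lemma second_derivative_basis_expansion:
  fixes F :: "'a::euclidean_space \<Rightarrow> 'b::euclidean_space"
  assumes F: "smooth_on S F" and S: "open S" and p: "p \<in> S"
  shows "second_derivative F p v h = (\<Sum>i\<in>Basis. (v \<bullet> i) *\<^sub>R second_derivative F p i h)"
proof -
  have "((\<lambda>q. \<Sum>i\<in>Basis. (v \<bullet> i) *\<^sub>R frechet_derivative F (at q) i) has_derivative
          (\<lambda>h. \<Sum>i\<in>Basis. (v \<bullet> i) *\<^sub>R second_derivative F p i h)) (at p)"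
    unfolding second_derivative_def
    by (intro has_derivative_sum has_derivative_scaleR_right
          smooth_on_has_derivative[OF smooth_on_frechet_derivative[OF F] p])
  then have "((\<lambda>q. frechet_derivative F (at q) v) has_derivative
          (\<lambda>h. \<Sum>i\<in>Basis. (v \<bullet> i) *\<^sub>R second_derivative F p i h)) (at p)"
    by (rule has_derivative_transform_within_open[OF _ S p])
      (rule linear_basis_expansion[OF smooth_on_linear_derivative[OF F], symmetric])
  then show ?thesis
    unfolding second_derivative_def by (simp add: frechet_derivative_at[symmetric])
qed

lemma has_derivative_frechet_derivative_apply:
  fixes F :: "'a::euclidean_space \<Rightarrow> 'b::euclidean_space"
  assumes F: "smooth_on S F" and S: "open S" and p: "p \<in> S" and V: "(V has_derivative V') (at p)"
  shows "((\<lambda>q. frechet_derivative F (at q) (V q)) has_derivative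
          (\<lambda>h. frechet_derivative F (at p) (V' h) + second_derivative F p (V p) h)) (at p)"
proof -
  have "((\<lambda>q. \<Sum>i\<in>Basis. (V q \<bullet> i) *\<^sub>R frechet_derivative F (at q) i) has_derivative
     (\<lambda>h. \<Sum>i\<in>Basis. (V p \<bullet> i) *\<^sub>R second_derivative F p i h
             + (V' h \<bullet> i) *\<^sub>R frechet_derivative F (at p) i)) (at p)"
    unfolding second_derivative_def
    by (intro has_derivative_sum has_derivative_scaleR has_derivative_inner_left[OF V]
          smooth_on_has_derivative[OF smooth_on_frechet_derivative[OF F] p])
  then have "((\<lambda>q. frechet_derivative F (at q) (V q)) has_derivative
     (\<lambda>h. \<Sum>i\<in>Basis. (V p \<bullet> i) *\<^sub>R second_derivative F p i h
             + (V' h \<bullet> i) *\<^sub>R frechet_derivative F (at p) i)) (at p)"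
    by (rule has_derivative_transform_within_open[OF _ S p])
      (rule linear_basis_expansion[OF smooth_on_linear_derivative[OF F], symmetric])
  moreover have "(\<Sum>i\<in>Basis. (V p \<bullet> i) *\<^sub>R second_derivative F p i h
             + (V' h \<bullet> i) *\<^sub>R frechet_derivative F (at p) i)
      = frechet_derivative F (at p) (V' h) + second_derivative F p (V p) h" for h
    unfolding sum.distrib second_derivative_basis_expansion[OF F S p, of "V p"]
      linear_basis_expansion[OF smooth_on_linear_derivative[OF F p], of "V' h"]
    by (rule add.commute)
  ultimately show ?thesis by simp
qed

section \<open>Curvature of the snm-connection on \<open>\<real>\<^sup>3\<close>\<close>

definition snm_form :: "(R3 \<Rightarrow> R3) \<Rightarrow> R3 \<Rightarrow> R3 \<Rightarrow> R3 \<Rightarrow> real" where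
  "snm_form C p x z = frechet_derivative C (at p) x \<bullet> z - (C p \<bullet> x) * (C p \<bullet> z)"

lemma snm_conn_has_derivative:
  assumes C: "smooth_on UNIV C" and Y: "smooth_on UNIV Y" and Z: "smooth_on UNIV Z"
  shows "(snm_conn C Y Z has_derivative (\<lambda>h.
      (frechet_derivative Z (at p) (frechet_derivative Y (at p) h) + second_derivative Z p (Y p) h)
      + ((C p \<bullet> Z p) *\<^sub>R frechet_derivative Y (at p) h
         + (C p \<bullet> frechet_derivative Z (at p) h + frechet_derivative C (at p) h \<bullet> Z p) *\<^sub>R Y p)))
      (at p)"
proof -
  note D = smooth_on_has_derivative[OF _ UNIV_I]
  have "((\<lambda>q. frechet_derivative Z (at q) (Y q)) has_derivative (\<lambda>h.
      frechet_derivative Z (at p) (frechet_derivative Y (at p) h) + second_derivative Z p (Y p) h)) (at p)"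
    by (rule has_derivative_frechet_derivative_apply[OF Z open_UNIV UNIV_I D[OF Y]])
  moreover have "((\<lambda>q. (C q \<bullet> Z q) *\<^sub>R Y q) has_derivative (\<lambda>h. (C p \<bullet> Z p) *\<^sub>R frechet_derivative Y (at p) h
      + (C p \<bullet> frechet_derivative Z (at p) h + frechet_derivative C (at p) h \<bullet> Z p) *\<^sub>R Y p)) (at p)"
    by (intro has_derivative_scaleR has_derivative_inner D C Y Z)
  ultimately show ?thesis
    unfolding snm_conn_def flat_conn_def by (rule has_derivative_add)
qed

lemma curv_amb_eq:
  assumes C: "smooth_on UNIV C" and X: "smooth_on UNIV X" and Y: "smooth_on UNIV Y"
    and Z: "smooth_on UNIV Z"
  shows "curv_amb C X Y Z p
    = snm_form C p (X p) (Z p) *\<^sub>R Y p - snm_form C p (Y p) (Z p) *\<^sub>R X p"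
proof -
  have D_snm: "frechet_derivative (snm_conn C A Z) (at p) (B p) =
      (frechet_derivative Z (at p) (frechet_derivative A (at p) (B p)) + second_derivative Z p (A p) (B p))
      + ((C p \<bullet> Z p) *\<^sub>R frechet_derivative A (at p) (B p)
         + (C p \<bullet> frechet_derivative Z (at p) (B p) + frechet_derivative C (at p) (B p) \<bullet> Z p) *\<^sub>R A p)"
    if A: "smooth_on UNIV A" for A B :: "R3 \<Rightarrow> R3"
    by (simp add: frechet_derivative_at[OF snm_conn_has_derivative[OF C A Z], symmetric])
  have snm_at: "snm_conn C A W p = frechet_derivative W (at p) (A p) + (C p \<bullet> W p) *\<^sub>R A p"
    for A W :: "R3 \<Rightarrow> R3"
    by (simp add: snm_conn_def flat_conn_def)
  have "second_derivative Z p (Y p) (X p) = second_derivative Z p (X p) (Y p)"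
    by (rule second_derivative_symmetric[OF Z open_UNIV UNIV_I])
  moreover have "linear (frechet_derivative Z (at p))"
    by (rule smooth_on_linear_derivative[OF Z UNIV_I])
  ultimately show ?thesis
    unfolding curv_amb_def snm_at D_snm[OF X] D_snm[OF Y]
    unfolding snm_conn_def lie_amb_def flat_conn_def snm_form_def
    by (simp add: linear_diff algebra_simps inner_add_right inner_diff_right)
qed

lemma sec_amb_orthonormal:
  assumes C: "smooth_on UNIV C" and X1: "smooth_on UNIV X1" and X2: "smooth_on UNIV X2"
    and "norm (X1 p) = 1" "norm (X2 p) = 1" "X1 p \<bullet> X2 p = 0"
  shows "sec_amb C X1 X2 p = - (snm_form C p (X1 p) (X1 p) + snm_form C p (X2 p) (X2 p)) / 2"
  using assms(4-)
  by (simp add: sec_amb_def curv_amb_eq[OF C X1 X2 X2] curv_amb_eq[OF C X2 X1 X1]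
      inner_diff_left norm_eq_1 inner_commute algebra_simps)

definition coord_field :: "(R2 \<Rightarrow> R3) \<Rightarrow> (R2 \<Rightarrow> R3) \<Rightarrow> R2 \<Rightarrow> R2" where
  "coord_field f E u = coord f u (E u)"

lemma some_onb_tangent:
  assumes "onb_tangent f u e1 e2"
  obtains a b where "(SOME (a, b). onb_tangent f u a b) = (a, b)" and "onb_tangent f u a b"
proof -
  have "onb_tangent f u (fst (SOME (a, b). onb_tangent f u a b)) (snd (SOME (a, b). onb_tangent f u a b))"
    using someI[of "\<lambda>(a, b). onb_tangent f u a b" "(e1, e2)"] assms by (simp add: case_prod_beta)
  then show thesis using that by (metis prod.collapse)
qed

text \<open>In the next two lemmas \<open>(p\<^sub>i, q\<^sub>i)\<close> are the coordinates of the \<open>i\<close>-th vector of a new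
  orthonormal basis of the plane, and the left-hand sides are the determinant and the trace of the
  bilinear form \<open>(b\<^sub>j\<^sub>k)\<close> in that basis; orthonormality is assumed for the rows, respectively the
  columns, of the change of basis.\<close>
lemma det2_orthonormal_change:
  fixes p1 q1 p2 q2 b11 b12 b21 b22 :: real
  assumes "p1\<^sup>2 + q1\<^sup>2 = 1" "p2\<^sup>2 + q2\<^sup>2 = 1" "p1 * p2 + q1 * q2 = 0"
  shows "(p1*p1*b11 + p1*q1*b12 + q1*p1*b21 + q1*q1*b22) * (p2*p2*b11 + p2*q2*b12 + q2*p2*b21 + q2*q2*b22)
       - (p1*p2*b11 + p1*q2*b12 + q1*p2*b21 + q1*q2*b22) * (p2*p1*b11 + p2*q1*b12 + q2*p1*b21 + q2*q1*b22)
       = b11 * b22 - b12 * b21"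
proof -
  have "(p1*q2 - q1*p2)\<^sup>2 = (p1\<^sup>2 + q1\<^sup>2) * (p2\<^sup>2 + q2\<^sup>2) - (p1*p2 + q1*q2)\<^sup>2"
    by (simp add: power2_eq_square algebra_simps)
  then have "(p1*q2 - q1*p2)\<^sup>2 = 1" using assms by simp
  moreover have "(p1*p1*b11 + p1*q1*b12 + q1*p1*b21 + q1*q1*b22) * (p2*p2*b11 + p2*q2*b12 + q2*p2*b21 + q2*q2*b22)
       - (p1*p2*b11 + p1*q2*b12 + q1*p2*b21 + q1*q2*b22) * (p2*p1*b11 + p2*q1*b12 + q2*p1*b21 + q2*q1*b22)
       = (p1*q2 - q1*p2)\<^sup>2 * (b11 * b22 - b12 * b21)"
    by (simp add: power2_eq_square algebra_simps)
  ultimately show ?thesis by simp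
qed

lemma trace2_orthonormal_change:
  fixes p1 q1 p2 q2 b11 b12 b21 b22 :: real
  assumes "p1\<^sup>2 + p2\<^sup>2 = 1" "q1\<^sup>2 + q2\<^sup>2 = 1" "p1 * q1 + p2 * q2 = 0"
  shows "(p1*p1*b11 + p1*q1*b12 + q1*p1*b21 + q1*q1*b22) + (p2*p2*b11 + p2*q2*b12 + q2*p2*b21 + q2*q2*b22)
       = b11 + b22"
proof -
  have "(p1*p1*b11 + p1*q1*b12 + q1*p1*b21 + q1*q1*b22) + (p2*p2*b11 + p2*q2*b12 + q2*p2*b21 + q2*q2*b22)
     = (p1\<^sup>2 + p2\<^sup>2) * b11 + (p1*q1 + p2*q2) * (b12 + b21) + (q1\<^sup>2 + q2\<^sup>2) * b22"
    by (simp add: power2_eq_square algebra_simps)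
  then show ?thesis using assms by simp
qed

locale immersed_surface =
  fixes f N :: "R2 \<Rightarrow> R3" and U :: "R2 set"
  assumes U_open: "open U"
    and f_smooth: "smooth_on U f"
    and f_imm: "\<forall>u\<in>U. inj (frechet_derivative f (at u))"
    and N_smooth: "smooth_on U N"
    and N_normal: "\<forall>u\<in>U. \<forall>v\<in>tangent_space f u. v \<bullet> N u = 0"
begin

lemma linear_df: "u \<in> U \<Longrightarrow> linear (frechet_derivative f (at u))"
  by (rule smooth_on_linear_derivative[OF f_smooth])

lemma coord_df: "u \<in> U \<Longrightarrow> coord f u (frechet_derivative f (at u) \<xi>) = \<xi>"
  unfolding coord_def using f_imm by (metis (mono_tags, lifting) injD someI)

lemma df_coord: "u \<in> U \<Longrightarrow> v \<in> tangent_space f u \<Longrightarrow> frechet_derivative f (at u) (coord f u v) = v"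
  unfolding tangent_space_def by (auto simp: coord_df)

lemma tangent_field_normal: "tangent_field f U E \<Longrightarrow> u \<in> U \<Longrightarrow> E u \<bullet> N u = 0"
  using N_normal unfolding tangent_field_def by auto

lemma df_coord_field: "tangent_field f U E \<Longrightarrow> u \<in> U \<Longrightarrow> frechet_derivative f (at u) (coord_field f E u) = E u"
  unfolding tangent_field_def coord_field_def by (auto simp: df_coord)

definition partial1 :: "R2 \<Rightarrow> R3" where
  "partial1 u = frechet_derivative f (at u) (axis 1 1)"

definition partial2 :: "R2 \<Rightarrow> R3" where
  "partial2 u = frechet_derivative f (at u) (axis 2 1)"

definition gram_det :: "R2 \<Rightarrow> real" where
  "gram_det u = (partial1 u \<bullet> partial1 u) * (partial2 u \<bullet> partial2 u) - (partial1 u \<bullet> partial2 u)\<^sup>2"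

lemma df_eq_partials:
  assumes "u \<in> U"
  shows "frechet_derivative f (at u) \<xi> = (\<xi>$1) *\<^sub>R partial1 u + (\<xi>$2) *\<^sub>R partial2 u"
proof -
  have "\<xi> = (\<xi>$1) *\<^sub>R axis 1 1 + (\<xi>$2) *\<^sub>R axis 2 1"
    by (simp add: vec_eq_iff forall_2 axis_def)
  then show ?thesis
    unfolding partial1_def partial2_def
    by (metis linear_add[OF linear_df[OF assms]] linear_cmul[OF linear_df[OF assms]])
qed

lemma gram_det_nonzero:
  assumes u: "u \<in> U"
  shows "gram_det u \<noteq> 0"
proof
  assume g: "gram_det u = 0"
  have inj0: "frechet_derivative f (at u) \<xi> = 0 \<Longrightarrow> \<xi> = 0" for \<xi>
    using f_imm u linear_injective_0[OF linear_df[OF u]] by auto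
  define w where "w = (partial2 u \<bullet> partial2 u) *\<^sub>R partial1 u - (partial1 u \<bullet> partial2 u) *\<^sub>R partial2 u"
  have "w \<bullet> w = (partial2 u \<bullet> partial2 u) * gram_det u"
    unfolding w_def gram_det_def
    by (simp add: inner_diff_left inner_diff_right algebra_simps power2_eq_square inner_commute)
  then have "frechet_derivative f (at u) (vector [partial2 u \<bullet> partial2 u, - (partial1 u \<bullet> partial2 u)]) = 0"
    using g by (simp add: df_eq_partials[OF u] w_def)
  then have "partial2 u \<bullet> partial2 u = 0"
    using inj0 by (metis vector_2(1) zero_index)
  then have "axis 2 1 = (0::R2)"
    using inj0 unfolding partial2_def by (metis inner_eq_zero_iff)
  then show False by (simp add: axis_eq_0_iff)
qed

text \<open>Cramer's rule for the normal equations of \<open>v = \<xi>$1 f\<^sub>1 + \<xi>$2 f\<^sub>2\<close>; unlike the choice-based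
  definition of \<open>coord\<close>, this formula is visibly smooth in \<open>u\<close>.\<close>
lemma coord_eq_cramer:
  assumes u: "u \<in> U" and v: "v \<in> tangent_space f u"
  shows "coord f u v
    = (((v \<bullet> partial1 u) * (partial2 u \<bullet> partial2 u) - (v \<bullet> partial2 u) * (partial1 u \<bullet> partial2 u))
        / gram_det u) *\<^sub>R axis 1 1
    + (((v \<bullet> partial2 u) * (partial1 u \<bullet> partial1 u) - (v \<bullet> partial1 u) * (partial1 u \<bullet> partial2 u))
        / gram_det u) *\<^sub>R axis 2 1"
proof -
  define \<xi> where "\<xi> = coord f u v"
  have v_eq: "v = (\<xi>$1) *\<^sub>R partial1 u + (\<xi>$2) *\<^sub>R partial2 u"
    using df_coord[OF u v] df_eq_partials[OF u] unfolding \<xi>_def by metis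
  have g: "gram_det u \<noteq> 0" by (rule gram_det_nonzero[OF u])
  have "((v \<bullet> partial1 u) * (partial2 u \<bullet> partial2 u) - (v \<bullet> partial2 u) * (partial1 u \<bullet> partial2 u))
        / gram_det u = \<xi>$1"
   and "((v \<bullet> partial2 u) * (partial1 u \<bullet> partial1 u) - (v \<bullet> partial1 u) * (partial1 u \<bullet> partial2 u))
        / gram_det u = \<xi>$2"
    using g unfolding v_eq gram_det_def
    by (simp_all add: field_simps inner_add_left inner_commute power2_eq_square)
      (simp_all add: algebra_simps inner_commute)
  then show ?thesis
    unfolding \<xi>_def[symmetric] by (simp add: vec_eq_iff forall_2 axis_def)
qed

lemma coord_field_differentiable:
  assumes E: "tangent_field f U E" and u: "u \<in> U"
  shows "coord_field f E differentiable (at u)"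
proof -
  have sE: "smooth_on U E" and tE: "\<And>u. u \<in> U \<Longrightarrow> E u \<in> tangent_space f u"
    using E unfolding tangent_field_def by auto
  have d1: "partial1 differentiable (at u)" and d2: "partial2 differentiable (at u)"
    unfolding partial1_def[abs_def] partial2_def[abs_def]
    by (intro smooth_on_differentiable[OF smooth_on_frechet_derivative[OF f_smooth] u])+
  have dE: "E differentiable (at u)" by (rule smooth_on_differentiable[OF sE u])
  have dg: "gram_det differentiable (at u)"
    unfolding gram_det_def[abs_def] using d1 d2 by (simp add: power2_eq_square)
  define F where "F u = (((E u \<bullet> partial1 u) * (partial2 u \<bullet> partial2 u)
        - (E u \<bullet> partial2 u) * (partial1 u \<bullet> partial2 u)) / gram_det u) *\<^sub>R axis 1 1
      + (((E u \<bullet> partial2 u) * (partial1 u \<bullet> partial1 u)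
        - (E u \<bullet> partial1 u) * (partial1 u \<bullet> partial2 u)) / gram_det u) *\<^sub>R (axis 2 1 :: R2)" for u
  have "F differentiable (at u)"
    unfolding F_def[abs_def] using d1 d2 dE dg gram_det_nonzero[OF u]
    by (intro derivative_intros) auto
  then have "(coord_field f E has_derivative frechet_derivative F (at u)) (at u)"
    unfolding frechet_derivative_works
    by (rule has_derivative_transform_within_open[OF _ U_open u])
      (simp add: F_def coord_field_def coord_eq_cramer tE)
  then show ?thesis unfolding differentiable_def by blast
qed

lemma tangent_field_has_derivative:
  assumes E: "tangent_field f U E" and u: "u \<in> U"
  shows "(E has_derivative (\<lambda>h. frechet_derivative f (at u) (frechet_derivative (coord_field f E) (at u) h)
           + second_derivative f u (coord_field f E u) h)) (at u)"
proof -
  have "((\<lambda>u. frechet_derivative f (at u) (coord_field f E u)) has_derivative (\<lambda>h.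
      frechet_derivative f (at u) (frechet_derivative (coord_field f E) (at u) h)
      + second_derivative f u (coord_field f E u) h)) (at u)"
    by (intro has_derivative_frechet_derivative_apply[OF f_smooth U_open u]
        coord_field_differentiable[OF E u, unfolded frechet_derivative_works])
  then show ?thesis
    by (rule has_derivative_transform_within_open[OF _ U_open u]) (simp add: df_coord_field E)
qed

lemma normal_derivative_inner_tangent_field:
  assumes E: "tangent_field f U E" and u: "u \<in> U"
  shows "frechet_derivative N (at u) h \<bullet> E u = - (N u \<bullet> frechet_derivative E (at u) h)"
proof -
  have sE: "smooth_on U E" using E unfolding tangent_field_def by auto
  have "((\<lambda>u. N u \<bullet> E u) has_derivative
      (\<lambda>h. N u \<bullet> frechet_derivative E (at u) h + frechet_derivative N (at u) h \<bullet> E u)) (at u)"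
    by (rule has_derivative_inner[OF smooth_on_has_derivative[OF N_smooth u] smooth_on_has_derivative[OF sE u]])
  moreover have "((\<lambda>u. N u \<bullet> E u) has_derivative (\<lambda>h. 0)) (at u)"
    by (rule has_derivative_transform_within_open[OF has_derivative_const[of "0::real"] U_open u])
      (metis E tangent_field_normal inner_commute)
  ultimately show ?thesis
    by (metis (no_types, lifting) add_eq_0_iff has_derivative_unique)
qed

text \<open>The second fundamental form through the Weingarten equation \<open>h(v, w) = \<langle>-dN v, w\<rangle>\<close>;
  in this form it is visibly a bilinear form on tangent vectors.\<close>
definition weingarten :: "R2 \<Rightarrow> R3 \<Rightarrow> R3 \<Rightarrow> real" where
  "weingarten u v w = - (frechet_derivative N (at u) (coord f u v) \<bullet> w)"

lemma sff_eq_weingarten: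
  assumes Y: "tangent_field f U Y" and Z: "tangent_field f U Z" and u: "u \<in> U"
  shows "sff f N Y Z u = weingarten u (Y u) (Z u)"
  using normal_derivative_inner_tangent_field[OF Z u]
  by (simp add: sff_def flat_surf_def weingarten_def inner_commute)

lemma sff_vec_eq_weingarten:
  assumes u: "u \<in> U" and v: "v \<in> tangent_space f u" and w: "w \<in> tangent_space f u"
  shows "sff_vec f N u v w = weingarten u v w"
proof -
  have extension: "tangent_field f U (\<lambda>x. frechet_derivative f (at x) \<xi>)" for \<xi>
    unfolding tangent_field_def tangent_space_def
    using smooth_on_frechet_derivative[OF f_smooth] by auto
  show ?thesis
    unfolding sff_vec_def sff_eq_weingarten[OF extension extension u] df_coord[OF u v] df_coord[OF u w] ..
qed


lemma tangent_space_onb_expansion: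
  assumes u: "u \<in> U" and onb: "onb_tangent f u a b" and v: "v \<in> tangent_space f u"
  shows "v = (v \<bullet> a) *\<^sub>R a + (v \<bullet> b) *\<^sub>R b"
proof -
  have a: "a \<in> tangent_space f u" "norm a = 1" and b: "b \<in> tangent_space f u" "norm b = 1"
    and ab: "a \<bullet> b = 0" using onb unfolding onb_tangent_def by auto
  have "dim (tangent_space f u) = dim (UNIV :: R2 set)"
    unfolding tangent_space_def
    using dim_image_eq[OF linear_df[OF u]] f_imm u by (metis inj_on_subset subset_UNIV)
  then have dim: "dim (tangent_space f u) = 2" by simp
  have ne: "a \<noteq> b" using ab a(2) by (metis inner_eq_zero_iff norm_eq_zero zero_neq_one)
  have ind: "independent {a, b}"
    by (rule pairwise_orthogonal_independent)
      (use ab a b ne in \<open>auto simp: pairwise_def orthogonal_def inner_commute\<close>)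
  have "tangent_space f u \<subseteq> span {a, b}"
    by (rule card_ge_dim_independent) (use a b ind ne dim in auto)
  with v obtain k1 where "v - k1 *\<^sub>R a \<in> span {b}"
    using span_breakdown_eq by blast
  then obtain k2 where "v - k1 *\<^sub>R a = k2 *\<^sub>R b"
    unfolding span_singleton by auto
  then have v_eq: "v = k1 *\<^sub>R a + k2 *\<^sub>R b"
    by (simp add: algebra_simps)
  have "a \<bullet> a = 1" "b \<bullet> b = 1" "b \<bullet> a = 0"
    using a b ab by (simp_all add: norm_eq_1 inner_commute)
  then have "v \<bullet> a = k1" and "v \<bullet> b = k2"
    using ab unfolding v_eq by (simp_all add: inner_add_left)
  then show ?thesis using v_eq by simp
qed

lemma inner_onb_expansion:
  assumes u: "u \<in> U" and onb: "onb_tangent f u a b"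
    and v: "v \<in> tangent_space f u" and w: "w \<in> tangent_space f u"
  shows "v \<bullet> w = (v \<bullet> a) * (w \<bullet> a) + (v \<bullet> b) * (w \<bullet> b)"
proof -
  have "a \<bullet> a = 1" "b \<bullet> b = 1" "a \<bullet> b = 0" "b \<bullet> a = 0"
    using onb unfolding onb_tangent_def by (auto simp: norm_eq_1 inner_commute)
  moreover have "v \<bullet> w = ((v \<bullet> a) *\<^sub>R a + (v \<bullet> b) *\<^sub>R b) \<bullet> ((w \<bullet> a) *\<^sub>R a + (w \<bullet> b) *\<^sub>R b)"
    using tangent_space_onb_expansion[OF u onb] v w by metis
  ultimately show ?thesis
    by (simp add: inner_add_left inner_add_right)
qed

lemma weingarten_onb_expansion:
  assumes u: "u \<in> U" and onb: "onb_tangent f u a b"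
    and v: "v \<in> tangent_space f u" and w: "w \<in> tangent_space f u"
  shows "weingarten u v w = (v \<bullet> a) * (w \<bullet> a) * weingarten u a a + (v \<bullet> a) * (w \<bullet> b) * weingarten u a b
    + (v \<bullet> b) * (w \<bullet> a) * weingarten u b a + (v \<bullet> b) * (w \<bullet> b) * weingarten u b b"
proof -
  have a: "a \<in> tangent_space f u" and b: "b \<in> tangent_space f u"
    using onb unfolding onb_tangent_def by auto
  have lin_f: "linear (frechet_derivative f (at u))" by (rule linear_df[OF u])
  have lin_N: "linear (frechet_derivative N (at u))" by (rule smooth_on_linear_derivative[OF N_smooth u])
  have "v = frechet_derivative f (at u) ((v \<bullet> a) *\<^sub>R coord f u a + (v \<bullet> b) *\<^sub>R coord f u b)"
    by (subst tangent_space_onb_expansion[OF u onb v])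
      (simp add: linear_add[OF lin_f] linear_cmul[OF lin_f] df_coord[OF u] a b)
  then have "coord f u v = (v \<bullet> a) *\<^sub>R coord f u a + (v \<bullet> b) *\<^sub>R coord f u b"
    by (metis coord_df[OF u])
  then show ?thesis
    unfolding weingarten_def
    by (subst tangent_space_onb_expansion[OF u onb w])
      (simp add: linear_add[OF lin_N] linear_cmul[OF lin_N] inner_add_left inner_add_right algebra_simps)
qed

lemma gauss_curv_mean_curv_onb:
  assumes u: "u \<in> U" and onb: "onb_tangent f u e1 e2"
  shows "gauss_curv f N u
      = weingarten u e1 e1 * weingarten u e2 e2 - weingarten u e1 e2 * weingarten u e2 e1"
    and "mean_curv f N u = (weingarten u e1 e1 + weingarten u e2 e2) / 2"
proof -
  obtain a b where ab: "(SOME (a, b). onb_tangent f u a b) = (a, b)" and onb': "onb_tangent f u a b"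
    using some_onb_tangent[OF onb] .
  have e: "e1 \<in> tangent_space f u" "e2 \<in> tangent_space f u" "e1 \<bullet> e1 = 1" "e2 \<bullet> e2 = 1" "e1 \<bullet> e2 = 0"
    using onb unfolding onb_tangent_def by (auto simp: norm_eq_1)
  have ab_tan: "a \<in> tangent_space f u" "b \<in> tangent_space f u" "a \<bullet> a = 1" "b \<bullet> b = 1" "a \<bullet> b = 0"
    using onb' unfolding onb_tangent_def by (auto simp: norm_eq_1)
  note inner_e = inner_onb_expansion[OF u onb] and inner_ab = inner_onb_expansion[OF u onb']
  note W = weingarten_onb_expansion[OF u onb]
  have "gauss_curv f N u = weingarten u a a * weingarten u b b - weingarten u a b * weingarten u b a"
    unfolding gauss_curv_def ab using ab_tan by (simp add: sff_vec_eq_weingarten[OF u])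
  also have "\<dots> = weingarten u e1 e1 * weingarten u e2 e2 - weingarten u e1 e2 * weingarten u e2 e1"
    unfolding W[OF ab_tan(1) ab_tan(1)] W[OF ab_tan(1) ab_tan(2)] W[OF ab_tan(2) ab_tan(1)]
      W[OF ab_tan(2) ab_tan(2)]
    by (rule det2_orthonormal_change)
      (use inner_e[OF ab_tan(1) ab_tan(1)] inner_e[OF ab_tan(2) ab_tan(2)] inner_e[OF ab_tan(1) ab_tan(2)] ab_tan
        in \<open>simp_all add: power2_eq_square\<close>)
  finally show "gauss_curv f N u
      = weingarten u e1 e1 * weingarten u e2 e2 - weingarten u e1 e2 * weingarten u e2 e1" .
  have "mean_curv f N u = (weingarten u a a + weingarten u b b) / 2"
    unfolding mean_curv_def ab using ab_tan by (simp add: sff_vec_eq_weingarten[OF u])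
  also have "\<dots> = (weingarten u e1 e1 + weingarten u e2 e2) / 2"
    unfolding W[OF ab_tan(1) ab_tan(1)] W[OF ab_tan(2) ab_tan(2)]
    by (subst trace2_orthonormal_change)
      (use inner_ab[OF e(1) e(1)] inner_ab[OF e(2) e(2)] inner_ab[OF e(1) e(2)] e
        in \<open>simp_all add: power2_eq_square inner_commute\<close>)
  finally show "mean_curv f N u = (weingarten u e1 e1 + weingarten u e2 e2) / 2" .
qed

end

section \<open>The Gauss equation of the induced connection\<close>

lemma inner_tan_part: "T \<bullet> N u = 0 \<Longrightarrow> tan_part N u v \<bullet> T = v \<bullet> T"
  by (simp add: tan_part_def inner_diff_right inner_commute)

lemma tan_part_derivative_inner:
  assumes V: "V differentiable (at u)" and N: "N differentiable (at u)" and T: "T \<bullet> N u = 0"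
  shows "frechet_derivative (\<lambda>u. tan_part N u (V u)) (at u) h \<bullet> T
    = frechet_derivative V (at u) h \<bullet> T - (V u \<bullet> N u) * (frechet_derivative N (at u) h \<bullet> T)"
proof -
  have "((\<lambda>u. tan_part N u (V u)) has_derivative (\<lambda>h.
      frechet_derivative V (at u) h - ((V u \<bullet> N u) *\<^sub>R frechet_derivative N (at u) h
        + (V u \<bullet> frechet_derivative N (at u) h + frechet_derivative V (at u) h \<bullet> N u) *\<^sub>R N u))) (at u)"
    using V N unfolding tan_part_def frechet_derivative_works
    by (intro has_derivative_diff has_derivative_scaleR has_derivative_inner)
  then show ?thesis
    using T by (simp add: frechet_derivative_at[symmetric] inner_diff_right inner_add_right inner_commute)
qed

definition snm_surf :: "(R3 \<Rightarrow> R3) \<Rightarrow> (R2 \<Rightarrow> R3) \<Rightarrow> (R2 \<Rightarrow> R3) \<Rightarrow> (R2 \<Rightarrow> R3) \<Rightarrow> R2 \<Rightarrow> R3" where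
  "snm_surf C f Y Z u = flat_surf f Y Z u + (C (f u) \<bullet> Z u) *\<^sub>R Y u"

lemma flat_surf_eq: "flat_surf f Y Z u = frechet_derivative Z (at u) (coord_field f Y u)"
  by (simp add: flat_surf_def coord_field_def)

lemma ind_conn_eq_tan_part: "ind_conn C f N Y Z = (\<lambda>u. tan_part N u (snm_surf C f Y Z u))"
  by (simp add: ind_conn_def snm_surf_def fun_eq_iff)

lemma ind_conn_inner_tangent:
  "T \<bullet> N u = 0 \<Longrightarrow> ind_conn C f N X W u \<bullet> T
     = frechet_derivative W (at u) (coord_field f X u) \<bullet> T + (C (f u) \<bullet> W u) * (X u \<bullet> T)"
  by (simp add: ind_conn_eq_tan_part inner_tan_part snm_surf_def flat_surf_eq inner_add_left)

context immersed_surface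
begin

lemma snm_surf_has_derivative:
  assumes C: "smooth_on UNIV C" and Y: "tangent_field f U Y" and Z: "tangent_field f U Z"
    and u: "u \<in> U"
  shows "(snm_surf C f Y Z has_derivative (\<lambda>h.
      (frechet_derivative Z (at u) (frechet_derivative (coord_field f Y) (at u) h)
        + second_derivative Z u (coord_field f Y u) h)
      + ((C (f u) \<bullet> Z u) *\<^sub>R frechet_derivative Y (at u) h
        + (C (f u) \<bullet> frechet_derivative Z (at u) h
           + frechet_derivative C (at (f u)) (frechet_derivative f (at u) h) \<bullet> Z u) *\<^sub>R Y u)))
    (at u)"
proof -
  have sY: "smooth_on U Y" and sZ: "smooth_on U Z"
    using Y Z unfolding tangent_field_def by auto
  have Cf: "((\<lambda>u. C (f u)) has_derivative
      (\<lambda>h. frechet_derivative C (at (f u)) (frechet_derivative f (at u) h))) (at u)"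
    using has_derivative_compose[OF smooth_on_has_derivative[OF f_smooth u]
        smooth_on_has_derivative[OF C UNIV_I]] .
  have "((\<lambda>u. frechet_derivative Z (at u) (coord_field f Y u)) has_derivative (\<lambda>h.
      frechet_derivative Z (at u) (frechet_derivative (coord_field f Y) (at u) h)
      + second_derivative Z u (coord_field f Y u) h)) (at u)"
    by (intro has_derivative_frechet_derivative_apply[OF sZ U_open u]
        coord_field_differentiable[OF Y u, unfolded frechet_derivative_works])
  moreover have "((\<lambda>u. (C (f u) \<bullet> Z u) *\<^sub>R Y u) has_derivative (\<lambda>h.
      (C (f u) \<bullet> Z u) *\<^sub>R frechet_derivative Y (at u) h
      + (C (f u) \<bullet> frechet_derivative Z (at u) h
         + frechet_derivative C (at (f u)) (frechet_derivative f (at u) h) \<bullet> Z u) *\<^sub>R Y u)) (at u)"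
    by (intro has_derivative_scaleR has_derivative_inner Cf
        smooth_on_has_derivative[OF sY u] smooth_on_has_derivative[OF sZ u])
  ultimately show ?thesis
    unfolding snm_surf_def[abs_def] flat_surf_eq by (rule has_derivative_add)
qed

lemma snm_surf_inner_normal:
  assumes Y: "tangent_field f U Y" and Z: "tangent_field f U Z" and u: "u \<in> U"
  shows "snm_surf C f Y Z u \<bullet> N u = weingarten u (Y u) (Z u)"
  using sff_eq_weingarten[OF Y Z u] tangent_field_normal[OF Y u]
  by (simp add: snm_surf_def sff_def inner_add_left)

lemma coord_lie_surf:
  assumes X: "tangent_field f U X" and Y: "tangent_field f U Y" and u: "u \<in> U"
  shows "coord_field f (lie_surf f X Y) u
    = frechet_derivative (coord_field f Y) (at u) (coord_field f X u)
      - frechet_derivative (coord_field f X) (at u) (coord_field f Y u)"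
proof -
  have "lie_surf f X Y u
      = frechet_derivative Y (at u) (coord_field f X u) - frechet_derivative X (at u) (coord_field f Y u)"
    by (simp add: lie_surf_def flat_surf_eq)
  also have "\<dots> = frechet_derivative f (at u) (frechet_derivative (coord_field f Y) (at u) (coord_field f X u)
      - frechet_derivative (coord_field f X) (at u) (coord_field f Y u))"
    using second_derivative_symmetric[OF f_smooth U_open u]
    by (simp add: frechet_derivative_at[OF tangent_field_has_derivative[OF X u], symmetric]
        frechet_derivative_at[OF tangent_field_has_derivative[OF Y u], symmetric]
        linear_diff[OF linear_df[OF u]])
  finally show ?thesis
    by (simp add: coord_field_def coord_df[OF u])
qed


lemma ind_conn_ind_conn_inner_tangent:
  assumes C: "smooth_on UNIV C" and B: "tangent_field f U B" and Z: "tangent_field f U Z"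
    and u: "u \<in> U" and T: "T \<bullet> N u = 0"
  shows "ind_conn C f N A (ind_conn C f N B Z) u \<bullet> T
    = frechet_derivative (snm_surf C f B Z) (at u) (coord_field f A u) \<bullet> T
      + weingarten u (B u) (Z u) * weingarten u (A u) T
      + (C (f u) \<bullet> snm_surf C f B Z u - weingarten u (B u) (Z u) * (C (f u) \<bullet> N u)) * (A u \<bullet> T)"
proof -
  have diff: "snm_surf C f B Z differentiable (at u)"
    using snm_surf_has_derivative[OF C B Z u] unfolding differentiable_def by blast
  have "frechet_derivative (ind_conn C f N B Z) (at u) (coord_field f A u) \<bullet> T
      = frechet_derivative (snm_surf C f B Z) (at u) (coord_field f A u) \<bullet> T
        - weingarten u (B u) (Z u) * (frechet_derivative N (at u) (coord_field f A u) \<bullet> T)"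
    unfolding ind_conn_eq_tan_part snm_surf_inner_normal[OF B Z u, where C=C, symmetric]
    by (rule tan_part_derivative_inner[OF diff smooth_on_differentiable[OF N_smooth u] T])
  moreover have "C (f u) \<bullet> ind_conn C f N B Z u
      = C (f u) \<bullet> snm_surf C f B Z u - weingarten u (B u) (Z u) * (C (f u) \<bullet> N u)"
    using snm_surf_inner_normal[OF B Z u]
    by (simp add: ind_conn_eq_tan_part tan_part_def inner_diff_right)
  ultimately show ?thesis
    by (simp add: ind_conn_inner_tangent[where N=N and u=u, OF T] weingarten_def coord_field_def)
qed

lemma gauss_equation:
  assumes C: "smooth_on UNIV C" and X: "tangent_field f U X" and Y: "tangent_field f U Y"
    and Z: "tangent_field f U Z" and u: "u \<in> U" and T: "T \<bullet> N u = 0"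
  shows "curv_surf C f N X Y Z u \<bullet> T =
      snm_form C (f u) (X u) (Z u) * (Y u \<bullet> T) - snm_form C (f u) (Y u) (Z u) * (X u \<bullet> T)
    + weingarten u (Y u) (Z u) * weingarten u (X u) T - weingarten u (X u) (Z u) * weingarten u (Y u) T
    - (C (f u) \<bullet> N u) * (weingarten u (Y u) (Z u) * (X u \<bullet> T) - weingarten u (X u) (Z u) * (Y u \<bullet> T))"
proof -
  have sZ: "smooth_on U Z" using Z unfolding tangent_field_def by auto
  have D_snm: "frechet_derivative (snm_surf C f B Z) (at u) h =
      (frechet_derivative Z (at u) (frechet_derivative (coord_field f B) (at u) h)
        + second_derivative Z u (coord_field f B u) h)
      + ((C (f u) \<bullet> Z u) *\<^sub>R frechet_derivative B (at u) h
        + (C (f u) \<bullet> frechet_derivative Z (at u) h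
           + frechet_derivative C (at (f u)) (frechet_derivative f (at u) h) \<bullet> Z u) *\<^sub>R B u)"
    if B: "tangent_field f U B" for B h
    by (simp add: frechet_derivative_at[OF snm_surf_has_derivative[OF C B Z u], symmetric])
  have "second_derivative Z u (coord_field f Y u) (coord_field f X u)
      = second_derivative Z u (coord_field f X u) (coord_field f Y u)"
    by (rule second_derivative_symmetric[OF sZ U_open u])
  moreover have "linear (frechet_derivative Z (at u))"
    by (rule smooth_on_linear_derivative[OF sZ u])
  ultimately show ?thesis
    unfolding curv_surf_def inner_diff_left
      ind_conn_ind_conn_inner_tangent[OF C Y Z u T] ind_conn_ind_conn_inner_tangent[OF C X Z u T]
    unfolding ind_conn_inner_tangent[where N=N and u=u, OF T] coord_lie_surf[OF X Y u] D_snm[OF X] D_snm[OF Y]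
      df_coord_field[OF X u] df_coord_field[OF Y u]
    by (simp add: snm_form_def snm_surf_def flat_surf_eq lie_surf_def linear_diff algebra_simps
        inner_add_left inner_add_right inner_diff_left inner_diff_right)
qed

end

theorem mainTheorem2:
  fixes C X1 X2 :: "R3 \<Rightarrow> R3" and f N E1 E2 :: "R2 \<Rightarrow> R3" and U :: "R2 set" and u0 :: R2
  assumes C_smooth: "smooth_on UNIV C"
    and U_open: "open U"
    and f_smooth: "smooth_on U f"
    and f_imm: "\<forall>u\<in>U. inj (frechet_derivative f (at u))"
    and N_smooth: "smooth_on U N"
    and N_unit: "\<forall>u\<in>U. norm (N u) = 1"
    and N_normal: "\<forall>u\<in>U. \<forall>v\<in>tangent_space f u. v \<bullet> N u = 0"
    and u0: "u0 \<in> U"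
    and E1: "tangent_field f U E1" and E2: "tangent_field f U E2"
    and onb: "norm (E1 u0) = 1" "norm (E2 u0) = 1" "E1 u0 \<bullet> E2 u0 = 0"
    and X1: "smooth_on UNIV X1" "X1 (f u0) = E1 u0"
    and X2: "smooth_on UNIV X2" "X2 (f u0) = E2 u0"
  shows "sec_surf C f N E1 E2 u0
           = sec_amb C X1 X2 (f u0) + gauss_curv f N u0 - (C (f u0) \<bullet> N u0) * mean_curv f N u0"
proof -
  interpret immersed_surface f N U
    using U_open f_smooth f_imm N_smooth N_normal by unfold_locales
  have onb_tangent: "onb_tangent f u0 (E1 u0) (E2 u0)"
    using E1 E2 u0 onb unfolding onb_tangent_def tangent_field_def by auto
  have normal: "E1 u0 \<bullet> N u0 = 0" "E2 u0 \<bullet> N u0 = 0"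
    using tangent_field_normal E1 E2 u0 by auto
  have ambient: "sec_amb C X1 X2 (f u0)
      = - (snm_form C (f u0) (E1 u0) (E1 u0) + snm_form C (f u0) (E2 u0) (E2 u0)) / 2"
    using sec_amb_orthonormal[OF C_smooth X1(1) X2(1)] X1(2) X2(2) onb by simp
  have "E1 u0 \<bullet> E1 u0 = 1" "E2 u0 \<bullet> E2 u0 = 1" "E2 u0 \<bullet> E1 u0 = 0"
    using onb by (simp_all add: norm_eq_1 inner_commute)
  then show ?thesis
    unfolding sec_surf_def gauss_equation[OF C_smooth E1 E2 E2 u0 normal(1)]
      gauss_equation[OF C_smooth E2 E1 E1 u0 normal(2)] ambient
      gauss_curv_mean_curv_onb[OF u0 onb_tangent]
    using onb by (simp add: field_simps)
qed

end
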